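(* Let $\langle X,d\rangle$ be a metric space. The following are equivalent: (1) $X$ is cofinally Bourbaki quasi-complete; (2) whenever $f:X\to\mathbb{R}$ is a continuous, nowhere-zero function that maps every cofinally Bourbaki quasi-Cauchy sequence in $X$ to a cofinally Bourbaki-Cauchy sequence in $\mathbb{R}$, the reciprocal $1/f$ is also continuous and maps every cofinally Bourbaki quasi-Cauchy sequence in $X$ to a cofinally Bourbaki-Cauchy sequence in $\mathbb{R}$.
   Context: For $\varepsilon>0$, an $\varepsilon$-chain joining $x,y$ is a finite sequence $x=x_0,\dots,x_n=y$ with $d(x_{i-1},x_i)<\varepsilon$. A sequence $\langle x_n\rangle$ in $X$ is cofinally Bourbaki quasi-Cauchy if for every $\varepsilon>0$ there is an infinite $N_\varepsilon\subseteq\mathbb{N}$ such that any $x_j,x_k$ with $j,k\in N_\varepsilon$ can be joined by an $\varepsilon$-chain; $X$ is cofinally Bourbaki quasi-complete if every such sequence has a cluster point. In a metric space $\langle Y,\rho\rangle$, let $S^1_\rho(p,\varepsilon)$ be the open ball of radius $\varepsilon$ about $p$ and $S^{m}_\rho(p,\varepsilon)=\{y: \rho(y,S^{m-1}_\rho(p,\varepsilon))<\varepsilon\}$. A sequence $\langle y_n\rangle$ in $Y$ is cofinally Bourbaki-Cauchy if for every $\varepsilon>0$ there exist an infinite $N_\varepsilon\subseteq\mathbb{N}$, $m\in\mathbb{N}$ and $p\in Y$ with $y_n\in S^m_\rho(p,\varepsilon)$ for all $n\in N_\varepsilon$. *)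

theory Defs
  imports "HOL-Analysis.Analysis"
begin

definition eps_chain_joins :: "real \<Rightarrow> 'a::metric_space \<Rightarrow> 'a \<Rightarrow> bool" where
  "eps_chain_joins e x y \<longleftrightarrow>
     (\<exists>(z::nat \<Rightarrow> 'a) n. z 0 = x \<and> z n = y \<and> (\<forall>i<n. dist (z i) (z (Suc i)) < e))"

definition cofinally_bourbaki_quasi_cauchy :: "(nat \<Rightarrow> 'a::metric_space) \<Rightarrow> bool" where
  "cofinally_bourbaki_quasi_cauchy s \<longleftrightarrow>
     (\<forall>e>0. \<exists>N::nat set. infinite N \<and> (\<forall>j\<in>N. \<forall>k\<in>N. eps_chain_joins e (s j) (s k)))"

definition cluster_point_seq :: "(nat \<Rightarrow> 'a::metric_space) \<Rightarrow> 'a \<Rightarrow> bool" where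
  "cluster_point_seq s x \<longleftrightarrow> (\<forall>e>0. \<forall>m. \<exists>n\<ge>m. dist (s n) x < e)"

text \<open>The metric space is the whole type 'a.\<close>
definition cofinally_bourbaki_quasi_complete :: "'a::metric_space itself \<Rightarrow> bool" where
  "cofinally_bourbaki_quasi_complete _ \<longleftrightarrow>
     (\<forall>s::nat \<Rightarrow> 'a. cofinally_bourbaki_quasi_cauchy s \<longrightarrow> (\<exists>x. cluster_point_seq s x))"

text \<open>Iterated enlargements: bourbaki_ball p e m is S^(m+1)(p,e) of the paper
  (index shifted by one: bourbaki_ball p e 0 is the open ball S^1).\<close>
primrec bourbaki_ball :: "'a::metric_space \<Rightarrow> real \<Rightarrow> nat \<Rightarrow> 'a set" where
  "bourbaki_ball p e 0 = ball p e"
| "bourbaki_ball p e (Suc m) = {y. infdist y (bourbaki_ball p e m) < e}"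

definition cofinally_bourbaki_cauchy :: "(nat \<Rightarrow> 'a::metric_space) \<Rightarrow> bool" where
  "cofinally_bourbaki_cauchy s \<longleftrightarrow>
     (\<forall>e>0. \<exists>N::nat set. \<exists>m p. infinite N \<and> (\<forall>n\<in>N. s n \<in> bourbaki_ball p e m))"

end

theory Submission
  imports Defs
begin

text \<open>In a normed space the iterated enlargement \<open>S\<^sup>m(p,\<epsilon>)\<close> is the ball of radius \<open>m\<epsilon>\<close>,
  so a sequence there is cofinally Bourbaki-Cauchy exactly when some subsequence is bounded.
  If \<open>X\<close> is cofinally Bourbaki quasi-complete, every cofinally Bourbaki quasi-Cauchy
  sequence \<open>s\<close> has a cluster point \<open>x\<close>; since \<open>1/f\<close> is continuous at \<open>x\<close>, it is bounded along
  the infinitely many \<open>s n\<close> near \<open>x\<close>. Conversely, if such an \<open>s\<close> has no cluster point, the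
  distance from \<open>(x,0)\<close> to the graph \<open>{(s n, 1/(n+1))}\<close> in \<open>X \<times> \<real>\<close>, truncated at 1, is a
  continuous, positive and bounded function \<open>f\<close> with \<open>f (s n) \<le> 1/(n+1)\<close>; being bounded, it
  satisfies the hypothesis of (2), but \<open>1/f \<circ> s\<close> has no bounded subsequence.\<close>

definition cofinally_bounded :: "(nat \<Rightarrow> 'a::real_normed_vector) \<Rightarrow> bool" where
  "cofinally_bounded y \<longleftrightarrow> (\<exists>N B. infinite N \<and> (\<forall>n\<in>N. norm (y n) \<le> B))"

lemma infdist_lessE:
  assumes "A \<noteq> {}" "infdist y A < e"
  obtains z where "z \<in> A" "dist y z < e"
proof -
  have "Inf ((\<lambda>a. dist y a) ` A) < e" using assms by (simp add: infdist_notempty)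
  then show ?thesis
    using cInf_lessD[of "(\<lambda>a. dist y a) ` A" e] assms(1) that by blast
qed

lemma center_in_bourbaki_ball:
  assumes "e > 0"
  shows "p \<in> bourbaki_ball p e m"
  using assms by (induction m) auto

lemma bourbaki_ball_subset_ball:
  fixes p :: "'a::metric_space"
  assumes "e > 0"
  shows "bourbaki_ball p e m \<subseteq> ball p ((real m + 1) * e)"
proof (induction m)
  case 0
  then show ?case by simp
next
  case (Suc m)
  show ?case
  proof
    fix y assume "y \<in> bourbaki_ball p e (Suc m)"
    then have "infdist y (bourbaki_ball p e m) < e" by simp
    then obtain z where z: "z \<in> bourbaki_ball p e m" "dist y z < e"
      using infdist_lessE center_in_bourbaki_ball[OF assms] by blast
    then have "dist p z < (real m + 1) * e" using Suc.IH by auto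
    then show "y \<in> ball p ((real (Suc m) + 1) * e)"
      using z dist_triangle[of p y z] by (simp add: dist_commute algebra_simps)
  qed
qed

lemma ball_subset_bourbaki_ball:
  fixes p :: "'a::real_normed_vector"
  assumes "e > 0"
  shows "ball p ((real m + 1) * e) \<subseteq> bourbaki_ball p e m"
proof (induction m)
  case 0
  then show ?case by simp
next
  case (Suc m)
  show ?case
  proof
    fix y assume y: "y \<in> ball p ((real (Suc m) + 1) * e)"
    define c where "c = (real m + 1) / (real m + 2)"
    define z where "z = p + c *\<^sub>R (y - p)"
    have c: "0 < c" "c < 1" "1 - c = 1 / (real m + 2)" by (auto simp: c_def field_simps)
    have d: "dist p y < (real m + 2) * e" using y by (simp add: algebra_simps)
    have "dist p z = c * dist p y"
      using c by (simp add: z_def dist_norm norm_minus_commute)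
    also have "\<dots> < c * ((real m + 2) * e)"
      using d c by (intro mult_strict_left_mono) auto
    also have "\<dots> = (real m + 1) * e" by (simp add: c_def)
    finally have "z \<in> bourbaki_ball p e m" using Suc.IH by auto
    moreover have "dist y z = (1 - c) * dist p y"
    proof -
      have "y - z = (1 - c) *\<^sub>R (y - p)" by (simp add: z_def algebra_simps)
      then show ?thesis using c by (simp add: dist_norm norm_minus_commute)
    qed
    moreover have "(1 - c) * dist p y < e"
      using d unfolding c(3) by (simp add: field_simps)
    ultimately have "infdist y (bourbaki_ball p e m) < e"
      using infdist_le[of z "bourbaki_ball p e m" y] by linarith
    then show "y \<in> bourbaki_ball p e (Suc m)" by simp
  qed
qed

lemma cofinally_bourbaki_cauchy_iff_cofinally_bounded:
  fixes y :: "nat \<Rightarrow> 'a::real_normed_vector"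
  shows "cofinally_bourbaki_cauchy y \<longleftrightarrow> cofinally_bounded y"
proof
  assume "cofinally_bourbaki_cauchy y"
  then obtain N m p where N: "infinite N" "\<forall>n\<in>N. y n \<in> bourbaki_ball p 1 m"
    unfolding cofinally_bourbaki_cauchy_def by (meson zero_less_one)
  have "norm (y n) \<le> norm p + (real m + 1)" if "n \<in> N" for n
  proof -
    have "dist p (y n) < real m + 1"
      using N(2) that bourbaki_ball_subset_ball[of 1 p m] by auto
    then show ?thesis using norm_triangle_sub[of "y n" p] by (simp add: dist_norm norm_minus_commute)
  qed
  then show "cofinally_bounded y" using N(1) unfolding cofinally_bounded_def by blast
next
  assume "cofinally_bounded y"
  then obtain N B where N: "infinite N" "\<forall>n\<in>N. norm (y n) \<le> B"
    unfolding cofinally_bounded_def by blast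
  show "cofinally_bourbaki_cauchy y"
    unfolding cofinally_bourbaki_cauchy_def
  proof (intro allI impI)
    fix e :: real assume e: "e > 0"
    obtain m where "B / e < real m" using reals_Archimedean2 by blast
    then have "B < (real m + 1) * e" using e by (simp add: field_simps)
    then have "y n \<in> ball 0 ((real m + 1) * e)" if "n \<in> N" for n
      using N(2) that by fastforce
    then have "\<forall>n\<in>N. y n \<in> bourbaki_ball 0 e m"
      using ball_subset_bourbaki_ball[OF e, of 0 m] by blast
    then show "\<exists>N m p. infinite N \<and> (\<forall>n\<in>N. y n \<in> bourbaki_ball p e m)"
      using N(1) by blast
  qed
qed

lemma bounded_imp_cofinally_bounded:
  assumes "\<And>n. norm (y n) \<le> B"
  shows "cofinally_bounded y"
  using assms unfolding cofinally_bounded_def by blast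

lemma not_cofinally_bounded:
  assumes "\<And>n. real n \<le> norm (y n)"
  shows "\<not> cofinally_bounded y"
proof
  assume "cofinally_bounded y"
  then obtain N B where N: "infinite N" "\<forall>n\<in>N. norm (y n) \<le> B"
    unfolding cofinally_bounded_def by blast
  obtain m where "B < real m" using reals_Archimedean2 by blast
  moreover obtain n where "n \<in> N" "n > m"
    using N(1) unfolding infinite_nat_iff_unbounded by blast
  ultimately show False using N(2) assms[of n] by fastforce
qed

lemma cluster_point_imp_cofinally_bounded_comp:
  fixes g :: "'a::metric_space \<Rightarrow> 'b::real_normed_vector"
  assumes "isCont g x" "cluster_point_seq s x"
  shows "cofinally_bounded (g \<circ> s)"
proof -
  obtain d where d: "d > 0" "\<And>z. dist z x < d \<Longrightarrow> dist (g z) (g x) < 1"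
    using assms(1) unfolding continuous_at_eps_delta by (meson zero_less_one)
  have "infinite {n. dist (s n) x < d}"
    using assms(2) d(1) unfolding infinite_nat_iff_unbounded_le cluster_point_seq_def by blast
  moreover have "norm ((g \<circ> s) n) \<le> norm (g x) + 1" if "dist (s n) x < d" for n
  proof -
    have "norm (g (s n) - g x) < 1" using d(2)[OF that] by (simp add: dist_norm)
    then show ?thesis using norm_triangle_sub[of "g (s n)" "g x"] by simp
  qed
  ultimately show ?thesis unfolding cofinally_bounded_def by (metis mem_Collect_eq)
qed

lemma infdist_graph_zero_imp_cluster_point:
  fixes s :: "nat \<Rightarrow> 'a::metric_space"
  assumes "infdist (x, 0) (range (\<lambda>n. (s n, 1 / (real n + 1)))) = 0"
  shows "cluster_point_seq s x"
  unfolding cluster_point_seq_def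
proof (intro allI impI)
  fix e :: real and m :: nat assume e: "e > 0"
  have "(x, 0) \<in> closure (range (\<lambda>n. (s n, 1 / (real n + 1))))"
    using assms by (simp add: in_closure_iff_infdist_zero)
  moreover have "0 < min e (1 / (real m + 1))" using e by simp
  ultimately have "\<exists>q\<in>range (\<lambda>n. (s n, 1 / (real n + 1))). dist q (x, 0) < min e (1 / (real m + 1))"
    unfolding closure_approachable by blast
  then obtain n where n: "dist (s n, 1 / (real n + 1)) (x, 0) < min e (1 / (real m + 1))"
    by blast
  have "dist (s n) x < e"
    using n dist_fst_le[of "(s n, 1 / (real n + 1))" "(x, 0)"] by simp
  moreover have "1 / (real n + 1) < 1 / (real m + 1)"
    using n dist_snd_le[of "(s n, 1 / (real n + 1))" "(x, 0)"] by simp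
  then have "n \<ge> m" by (simp add: field_simps)
  ultimately show "\<exists>n\<ge>m. dist (s n) x < e" by blast
qed

lemma no_cluster_point_imp_vanishing_function:
  fixes s :: "nat \<Rightarrow> 'a::metric_space"
  assumes "\<And>x. \<not> cluster_point_seq s x"
  obtains f :: "'a \<Rightarrow> real"
  where "continuous_on UNIV f" "\<And>x. 0 < f x" "\<And>x. f x \<le> 1" "\<And>n. f (s n) \<le> 1 / (real n + 1)"
proof
  define g where "g x = infdist (x, 0) (range (\<lambda>n. (s n, 1 / (real n + 1))))" for x
  show "continuous_on UNIV (\<lambda>x. min (g x) 1)"
    unfolding g_def by (intro continuous_intros)
  show "0 < min (g x) 1" for x
    using assms infdist_graph_zero_imp_cluster_point[of x s] infdist_nonneg
    unfolding g_def by (smt (verit))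
  show "min (g x) 1 \<le> 1" for x by simp
  show "min (g (s n)) 1 \<le> 1 / (real n + 1)" for n
  proof -
    have "g (s n) \<le> dist (s n, 0::real) (s n, 1 / (real n + 1))"
      unfolding g_def by (rule infdist_le) blast
    also have "\<dots> = 1 / (real n + 1)" by (simp add: dist_Pair_Pair dist_real_def)
    finally show ?thesis by linarith
  qed
qed

theorem mainTheorem6:
  "cofinally_bourbaki_quasi_complete TYPE('a::metric_space) \<longleftrightarrow>
   (\<forall>f :: 'a \<Rightarrow> real.
      (continuous_on UNIV f \<and> (\<forall>x. f x \<noteq> 0) \<and>
       (\<forall>s. cofinally_bourbaki_quasi_cauchy s \<longrightarrow> cofinally_bourbaki_cauchy (f \<circ> s)))
      \<longrightarrow>
      (continuous_on UNIV (\<lambda>x. 1 / f x) \<and>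
       (\<forall>s. cofinally_bourbaki_quasi_cauchy s \<longrightarrow> cofinally_bourbaki_cauchy ((\<lambda>x. 1 / f x) \<circ> s))))"
  (is "_ \<longleftrightarrow> (\<forall>f. ?hyp f \<longrightarrow> ?concl f)")
proof
  assume complete: "cofinally_bourbaki_quasi_complete TYPE('a)"
  show "\<forall>f. ?hyp f \<longrightarrow> ?concl f"
  proof (intro allI impI conjI)
    fix f :: "'a \<Rightarrow> real" assume f: "?hyp f"
    then show cont: "continuous_on UNIV (\<lambda>x. 1 / f x)" by (auto intro!: continuous_intros)
    fix s :: "nat \<Rightarrow> 'a" assume "cofinally_bourbaki_quasi_cauchy s"
    then obtain x where "cluster_point_seq s x"
      using complete unfolding cofinally_bourbaki_quasi_complete_def by blast
    with cont show "cofinally_bourbaki_cauchy ((\<lambda>x. 1 / f x) \<circ> s)"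
      by (simp add: cofinally_bourbaki_cauchy_iff_cofinally_bounded
          continuous_on_eq_continuous_at cluster_point_imp_cofinally_bounded_comp)
  qed
next
  assume reciprocal: "\<forall>f. ?hyp f \<longrightarrow> ?concl f"
  show "cofinally_bourbaki_quasi_complete TYPE('a)"
    unfolding cofinally_bourbaki_quasi_complete_def
  proof (intro allI impI; rule ccontr)
    fix s :: "nat \<Rightarrow> 'a"
    assume s: "cofinally_bourbaki_quasi_cauchy s" and "\<nexists>x. cluster_point_seq s x"
    then obtain f :: "'a \<Rightarrow> real" where f: "continuous_on UNIV f" "\<And>x. 0 < f x"
      "\<And>x. f x \<le> 1" "\<And>n. f (s n) \<le> 1 / (real n + 1)"
      using no_cluster_point_imp_vanishing_function by blast
    have "cofinally_bounded (f \<circ> t)" for t :: "nat \<Rightarrow> 'a"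
      using f(2,3) by (intro bounded_imp_cofinally_bounded[of _ 1]) (simp add: less_imp_le)
    then have "?hyp f"
      using f(1,2) by (simp add: cofinally_bourbaki_cauchy_iff_cofinally_bounded less_imp_neq[symmetric])
    then have "cofinally_bounded ((\<lambda>x. 1 / f x) \<circ> s)"
      using reciprocal s by (simp add: cofinally_bourbaki_cauchy_iff_cofinally_bounded)
    moreover have "real n \<le> norm (((\<lambda>x. 1 / f x) \<circ> s) n)" for n
      using f(2)[of "s n"] f(4)[of n] by (simp add: field_simps)
    ultimately show False using not_cofinally_bounded by blast
  qed
qed

end
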